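(* Let $\tau>0$, let $\mathbf v$ be a smooth vector field on an open set of $(t,\mathbf x)\in(0,T)\times\mathbb R^d$, $\mathbf W:=\frac12(\nabla\mathbf v-(\nabla\mathbf v)^{\mathsf T})$, $\mathbf D:=\frac12(\nabla\mathbf v+(\nabla\mathbf v)^{\mathsf T})$, and let $\mathbf B$ be a smooth field of symmetric positive definite matrices with $\mathbf H:=\frac12\log\mathbf B$. Then $\mathbf B$ solves $\partial_t\mathbf B+(\mathbf v\cdot\nabla)\mathbf B+\frac1\tau(\mathbf B-\mathbf I)=(\nabla\mathbf v)\mathbf B+\mathbf B(\nabla\mathbf v)^{\mathsf T}$ if and only if $\mathbf H$ solves $\partial_t\mathbf H+(\mathbf v\cdot\nabla)\mathbf H+2\mathsf{Ad}_{\mathbf H}\boldsymbol\Omega^{\log}+\frac1{2\tau}(\mathbf I-e^{-2\mathbf H})=\mathbf D,$ where $\boldsymbol\Omega^{\log}:=\mathbf W-\mathcal L(2\mathsf{Ad}_{\mathbf H})\mathbf D$ with $\mathcal L(x)=\coth x-\frac1x$ ($x\ne0$), $\mathcal L(0)=0$. Moreover $\boldsymbol\Omega^{\log}$ is antisymmetric. Likewise, $\mathbf H$ solves $\partial_t\mathbf H+(\mathbf v\cdot\nabla)\mathbf H+2\mathsf{Ad}_{\mathbf H}\boldsymbol\Omega^{\log}+\frac1\tau\mathbf H=\mathbf D$ if and only if $\mathbf B$ solves $\partial_t\mathbf B+(\mathbf v\cdot\nabla)\mathbf B-(\nabla\mathbf v)\mathbf B-\mathbf B(\nabla\mathbf v)^{\mathsf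 T}+\frac1\tau\mathbf B\log\mathbf B=\mathbf 0$.
   Context: $(\nabla\mathbf v)_{ij}=\partial_{x_j}v_i$. $\mathsf{Ad}_{\mathbf G}\mathbf X=\tfrac12(\mathbf G\mathbf X-\mathbf X\mathbf G)$; for symmetric $\mathbf G=\mathbf Q\operatorname{diag}(g_i)\mathbf Q^{\mathsf T}$ ($\mathbf Q$ orthogonal) and real $h$, $h(\mathsf{Ad}_{\mathbf G})\mathbf X:=\mathbf Q\big([h(\frac{g_i-g_j}2)]\odot(\mathbf Q^{\mathsf T}\mathbf X\mathbf Q)\big)\mathbf Q^{\mathsf T}$ ($\odot$ entrywise product). Matrix exponential and logarithm are defined spectrally. *)

theory Defs
  imports "HOL-Analysis.Analysis"
begin

fun Ck_on :: "nat \<Rightarrow> ('a::real_normed_vector \<Rightarrow> 'b::real_normed_vector) \<Rightarrow> 'a set \<Rightarrow> bool" where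
  "Ck_on 0 f U = continuous_on U f"
| "Ck_on (Suc k) f U = ((\<forall>x\<in>U. f differentiable (at x)) \<and>
      (\<forall>h. Ck_on k (\<lambda>x. frechet_derivative f (at x) h) U))"

definition smooth_on :: "('a::real_normed_vector \<Rightarrow> 'b::real_normed_vector) \<Rightarrow> 'a set \<Rightarrow> bool" where
  "smooth_on f U \<longleftrightarrow> (\<forall>k. Ck_on k f U)"

definition diag_mat :: "real^'n \<Rightarrow> real^'n^'n" where
  "diag_mat g = (\<chi> i j. if i = j then g $ i else 0)"

text \<open>A chosen orthogonal diagonalisation G = Q diag(g) Q^T (meaningful for symmetric G).\<close>
definition sym_eig :: "real^'n^'n \<Rightarrow> (real^'n^'n) \<times> (real^'n)" where
  "sym_eig G = (SOME (Q, g). orthogonal_matrix Q \<and> G = Q ** diag_mat g ** transpose Q)"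

definition mat_fun :: "(real \<Rightarrow> real) \<Rightarrow> real^'n^'n \<Rightarrow> real^'n^'n" where
  "mat_fun h G = (case sym_eig G of (Q, g) \<Rightarrow> Q ** diag_mat (\<chi> i. h (g $ i)) ** transpose Q)"

definition mat_exp :: "real^'n^'n \<Rightarrow> real^'n^'n" where
  "mat_exp G = mat_fun exp G"

definition mat_log :: "real^'n^'n \<Rightarrow> real^'n^'n" where
  "mat_log G = mat_fun ln G"

definition Ad :: "real^'n^'n \<Rightarrow> real^'n^'n \<Rightarrow> real^'n^'n" where
  "Ad G X = (1/2) *\<^sub>R (G ** X - X ** G)"

text \<open>h(Ad_G) X := Q ([h((g_i - g_j)/2)] \<odot> (Q^T X Q)) Q^T for symmetric G.\<close>
definition Ad_fun :: "(real \<Rightarrow> real) \<Rightarrow> real^'n^'n \<Rightarrow> real^'n^'n \<Rightarrow> real^'n^'n" where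
  "Ad_fun h G X = (case sym_eig G of (Q, g) \<Rightarrow>
      (let Y = transpose Q ** X ** Q in
        Q ** (\<chi> i j. h ((g $ i - g $ j) / 2) * Y $ i $ j) ** transpose Q))"

text \<open>h(2 Ad_H) = (\<lambda>x. h (2 x))(Ad_H).\<close>
definition Lfun :: "real \<Rightarrow> real" where
  "Lfun x = (if x = 0 then 0 else cosh x / sinh x - 1 / x)"

definition sym_pos_def_mat :: "real^'n^'n \<Rightarrow> bool" where
  "sym_pos_def_mat A \<longleftrightarrow> transpose A = A \<and> (\<forall>y. y \<noteq> 0 \<longrightarrow> y \<bullet> (A *v y) > 0)"

definition dt :: "(real \<times> (real^'n) \<Rightarrow> 'b::real_normed_vector) \<Rightarrow> real \<times> (real^'n) \<Rightarrow> 'b" where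
  "dt F p = frechet_derivative F (at p) (1, 0)"

definition adv :: "(real \<times> (real^'n) \<Rightarrow> real^'n) \<Rightarrow> (real \<times> (real^'n) \<Rightarrow> 'b::real_normed_vector) \<Rightarrow> real \<times> (real^'n) \<Rightarrow> 'b" where
  "adv v F p = (\<Sum>j\<in>UNIV. (v p $ j) *\<^sub>R frechet_derivative F (at p) (0, axis j 1))"

text \<open>(\<nabla>v)_{ij} = \<partial>_{x_j} v_i.\<close>
definition grad :: "(real \<times> (real^'n) \<Rightarrow> real^'n) \<Rightarrow> real \<times> (real^'n) \<Rightarrow> real^'n^'n" where
  "grad v p = (\<chi> i j. frechet_derivative v (at p) (0, axis j 1) $ i)"

end

(*
  Write B = Q diag(b) Q^T with Q orthogonal and b > 0. The derivative dlog of the matrix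
  logarithm at B acts in the eigenbasis Q by entrywise multiplication with the divided
  differences (ln b_i - ln b_j) / (b_i - b_j) (Daleckii-Krein); the remainder of this
  linearisation is quadratic because the divided difference of ln is Lipschitz away from 0, as
  its integral representation shows. By the chain rule dt H + (v.grad) H = dlog(dt B + (v.grad) B) / 2.

  Entrywise in the eigenbasis, the correction L(2 Ad_H) D in Omega^log is exactly what makes
  2 Ad_H Omega^log + dlog(grad v B + B (grad v)^T) / 2 = D; with b = exp (2 h) this comes down to
  coth (h_i - h_j) = (b_i + b_j) / (b_i - b_j). Moreover dlog(B - I) = I - exp (-2 H) and
  dlog(B log B) = 2 H. So each equation for H is dlog/2 applied to the corresponding equation
  for B, and dlog is injective because all divided differences of ln are positive. Omega^log is
  antisymmetric because L is odd.
*)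

theory Submission
  imports Defs
begin

section \<open>Matrix algebra\<close>

lemma matrix_mult_nth: "((M::real^'n^'m) ** (N::real^'p^'n)) $ i $ j = (\<Sum>k\<in>UNIV. M$i$k * N$k$j)"
  by (simp add: matrix_matrix_mult_def)

lemma diag_mat_nth: "diag_mat g $ i $ j = (if i = j then g $ i else 0)"
  by (simp add: diag_mat_def)

lemma matrix_mult_diag_mat_nth: "((M::real^'n^'m) ** diag_mat g) $ i $ j = M$i$j * g$j"
  by (simp add: matrix_mult_nth diag_mat_nth if_distrib if_distribR cong: if_cong)

lemma diag_mat_mult_nth: "(diag_mat g ** (M::real^'m^'n)) $ i $ j = g$i * M$i$j"
  by (simp add: matrix_mult_nth diag_mat_nth if_distrib if_distribR cong: if_cong)

lemma diag_mat_mult_diag_mat: "diag_mat g ** diag_mat h = diag_mat (\<chi> i. g$i * h$i)"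
  by (simp add: vec_eq_iff diag_mat_mult_nth diag_mat_nth)

lemma transpose_add: "transpose (A + B) = transpose A + transpose (B::real^'n^'m)"
  by (simp add: vec_eq_iff transpose_def)

lemma transpose_diff: "transpose (A - B) = transpose A - transpose (B::real^'n^'m)"
  by (simp add: vec_eq_iff transpose_def)

lemma transpose_mult_mult_nth:
  "(transpose P ** M ** Q) $ i $ j = column i P \<bullet> (M *v column j Q)" for P M Q :: "real^'n^'n"
  by (simp add: matrix_mult_nth column_def inner_vec_def matrix_vector_mult_def
      sum_distrib_left sum_distrib_right transpose_def mult_ac) (rule sum.swap)

lemma matrix_conj_nth:
  "(R ** M ** transpose R) $ i $ j = (\<Sum>a\<in>UNIV. \<Sum>b\<in>UNIV. R$i$a * M$a$b * R$j$b)"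
  for R M :: "real^'n^'n"
  by (simp add: matrix_mult_nth transpose_def sum_distrib_right) (rule sum.swap)

lemma matrix_add_rdistrib: "((A::real^'n^'m) + B) ** (C::real^'p^'n) = A ** C + B ** C"
  by (simp add: vec_eq_iff matrix_mult_nth distrib_right sum.distrib)

lemma matrix_diff_rdistrib: "((A::real^'n^'m) - B) ** (C::real^'p^'n) = A ** C - B ** C"
  by (simp add: vec_eq_iff matrix_mult_nth left_diff_distrib sum_subtractf)

lemma matrix_diff_ldistrib: "(A::real^'n^'m) ** ((B::real^'p^'n) - C) = A ** B - A ** C"
  by (simp add: vec_eq_iff matrix_mult_nth right_diff_distrib sum_subtractf)

lemma matrix_mult_scaleR_right: "(A::real^'n^'m) ** (c *\<^sub>R (B::real^'p^'n)) = c *\<^sub>R (A ** B)"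
  by (simp add: vec_eq_iff matrix_mult_nth sum_distrib_left mult_ac)

lemma matrix_mult_scaleR_left: "(c *\<^sub>R (A::real^'n^'m)) ** (B::real^'p^'n) = c *\<^sub>R (A ** B)"
  by (simp add: vec_eq_iff matrix_mult_nth sum_distrib_left mult_ac)

lemma matrix_mult_uminus_right: "(A::real^'n^'m) ** (- (B::real^'p^'n)) = - (A ** B)"
  by (simp add: vec_eq_iff matrix_mult_nth sum_negf)

lemma matrix_mult_uminus_left: "(- (A::real^'n^'m)) ** (B::real^'p^'n) = - (A ** B)"
  by (simp add: vec_eq_iff matrix_mult_nth sum_negf)

lemmas matrix_mult_distribs = matrix_add_ldistrib matrix_add_rdistrib matrix_diff_ldistrib
  matrix_diff_rdistrib matrix_mult_scaleR_right matrix_mult_scaleR_left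
  matrix_mult_uminus_right matrix_mult_uminus_left

lemma orthogonal_matrix_cancel:
  fixes Q :: "real^'n^'n"
  assumes "orthogonal_matrix Q"
  shows "transpose Q ** Q = mat 1" "Q ** transpose Q = mat 1"
    and "X ** transpose Q ** Q = X" "X ** Q ** transpose Q = X"
  using assms by (simp_all add: orthogonal_matrix_def flip: matrix_mul_assoc)

lemma mat_1_eq_orthogonal_conj:
  fixes Q :: "real^'n^'n"
  assumes "orthogonal_matrix Q"
  shows "mat 1 = Q ** diag_mat (\<chi> i. 1) ** transpose Q"
proof -
  have "diag_mat (\<chi> i. 1) = (mat 1 :: real^'n^'n)" by (simp add: vec_eq_iff diag_mat_nth mat_def)
  thus ?thesis using assms by (simp add: orthogonal_matrix_cancel)
qed

lemma conj_diag_mat_diff: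
  "Q ** diag_mat g ** transpose Q - Q ** diag_mat h ** transpose Q = Q ** diag_mat (\<chi> i. g$i - h$i) ** transpose Q"
proof -
  have "diag_mat g - diag_mat h = diag_mat (\<chi> i. g$i - h$i)" by (simp add: vec_eq_iff diag_mat_nth)
  thus ?thesis by (simp flip: matrix_diff_ldistrib matrix_diff_rdistrib)
qed

lemma norm_matrix_vector_mult_le: "norm ((M::real^'n^'m) *v x) \<le> norm M * norm x"
proof -
  have "norm (M *v x) = L2_set (\<lambda>i. \<bar>(M *v x) $ i\<bar>) UNIV" by (simp add: norm_vec_def)
  also have "\<dots> \<le> L2_set (\<lambda>i. norm x * norm (M $ i)) UNIV"
  proof (rule L2_set_mono)
    fix i
    show "\<bar>(M *v x) $ i\<bar> \<le> norm x * norm (M $ i)"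
      using Cauchy_Schwarz_ineq2[of "M $ i" x] by (simp add: matrix_vector_mul_component mult.commute)
  qed auto
  also have "\<dots> = norm M * norm x"
    by (simp add: L2_set_right_distrib[symmetric] norm_vec_def mult.commute)
  finally show ?thesis .
qed

lemma abs_orthogonal_sandwich_le:
  fixes P Q M :: "real^'n^'n"
  assumes "orthogonal_matrix P" "orthogonal_matrix Q"
  shows "\<bar>(transpose P ** M ** Q) $ i $ j\<bar> \<le> norm M"
proof -
  have "\<bar>column i P \<bullet> (M *v column j Q)\<bar> \<le> norm (column i P) * (norm M * norm (column j Q))"
  proof -
    have "\<bar>column i P \<bullet> (M *v column j Q)\<bar> \<le> norm (column i P) * norm (M *v column j Q)"
      by (rule Cauchy_Schwarz_ineq2)
    also have "\<dots> \<le> norm (column i P) * (norm M * norm (column j Q))"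
      by (intro mult_left_mono norm_matrix_vector_mult_le norm_ge_zero)
    finally show ?thesis .
  qed
  thus ?thesis
    using assms by (simp add: transpose_mult_mult_nth orthogonal_matrix_orthonormal_columns)
qed

lemma norm_matrix_le_entrywise:
  fixes M :: "real^'n^'m"
  assumes "\<And>i j. \<bar>M $ i $ j\<bar> \<le> c"
  shows "norm M \<le> real CARD('m) * real CARD('n) * c"
proof -
  have "norm M \<le> (\<Sum>i\<in>UNIV. norm (M $ i))" unfolding norm_vec_def by (rule L2_set_le_sum) simp
  also have "\<dots> \<le> (\<Sum>i\<in>(UNIV::'m set). \<Sum>j\<in>(UNIV::'n set). c)"
    by (intro sum_mono order_trans[OF norm_le_l1_cart]) (simp add: assms)
  finally show ?thesis by simp
qed

section \<open>The spectral theorem for symmetric matrices\<close>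

lemma linear_le_quadratic_imp_eq_0:
  fixes c K :: real
  assumes "\<And>t. 2 * t * c \<le> t\<^sup>2 * K"
  shows "c = 0"
proof (rule ccontr)
  assume "c \<noteq> 0"
  define t where "t = c / (\<bar>K\<bar> + 1)"
  have tc: "0 < t * c"
    using \<open>c \<noteq> 0\<close> by (simp add: t_def zero_less_divide_iff add_nonneg_pos) (metis not_real_square_gt_zero)
  have "t\<^sup>2 * \<bar>K\<bar> = t * c * (\<bar>K\<bar> / (\<bar>K\<bar> + 1))"
    by (simp add: t_def power2_eq_square field_simps)
  also have "\<dots> < t * c"
    using mult_strict_left_mono[of "\<bar>K\<bar> / (\<bar>K\<bar> + 1)" 1 "t * c"] tc by simp
  finally have "t\<^sup>2 * \<bar>K\<bar> < t * c" .
  moreover have "2 * t * c \<le> t\<^sup>2 * K" by (rule assms)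
  moreover have "t\<^sup>2 * K \<le> t\<^sup>2 * \<bar>K\<bar>" by (simp add: mult_left_mono)
  ultimately show False using tc by linarith
qed

lemma rayleigh_maximiser_is_eigenvector:
  fixes A :: "real^'n^'n"
  assumes sym: "transpose A = A" and V: "subspace V" and inv: "\<And>x. x \<in> V \<Longrightarrow> A *v x \<in> V"
    and uV: "u \<in> V" and uu: "u \<bullet> u = 1"
    and max: "\<And>y. y \<in> V \<Longrightarrow> y \<bullet> (A *v y) \<le> (u \<bullet> (A *v u)) * (y \<bullet> y)"
  shows "A *v u = (u \<bullet> (A *v u)) *\<^sub>R u"
proof -
  define f where "f y = y \<bullet> (A *v y)" for y
  define w where "w = A *v u - f u *\<^sub>R u"
  have wV: "w \<in> V" unfolding w_def using V inv uV by (simp add: subspace_diff subspace_scale)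
  have Asym: "a \<bullet> (A *v b) = b \<bullet> (A *v a)" for a b
    by (metis dot_lmul_matrix inner_commute sym transpose_matrix_vector)
  have wu: "w \<bullet> u = 0"
    by (simp add: w_def inner_diff_left uu f_def inner_commute[of "A *v u" u])
  have wAu: "w \<bullet> (A *v u) = w \<bullet> w"
    by (simp add: w_def inner_diff_left inner_diff_right uu f_def inner_commute algebra_simps)
  \<comment> \<open>maximality of \<open>u\<close> along the line \<open>u + t w\<close>\<close>
  have "2 * t * (w \<bullet> w) \<le> t\<^sup>2 * (f u * (w \<bullet> w) - f w)" for t
  proof -
    have "f (u + t *\<^sub>R w) = f u + 2 * t * (w \<bullet> w) + t\<^sup>2 * f w"
      using Asym[of u w] wAu
      by (simp add: f_def matrix_vector_right_distrib matrix_vector_mult_scaleR inner_add_left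
          inner_add_right power2_eq_square algebra_simps)
    moreover have "(u + t *\<^sub>R w) \<bullet> (u + t *\<^sub>R w) = 1 + t\<^sup>2 * (w \<bullet> w)"
      by (simp add: inner_add_left inner_add_right uu wu inner_commute[of u w] power2_eq_square)
    moreover have "u + t *\<^sub>R w \<in> V" using uV wV V by (simp add: subspace_add subspace_scale)
    ultimately show ?thesis using max[of "u + t *\<^sub>R w"] by (simp add: f_def algebra_simps)
  qed
  hence "w \<bullet> w = 0" by (rule linear_le_quadratic_imp_eq_0)
  thus ?thesis by (simp add: w_def f_def)
qed

lemma symmetric_matrix_eigenvector_in_invariant_subspace:
  fixes A :: "real^'n^'n"
  assumes sym: "transpose A = A" and V: "subspace V" and inv: "\<And>x. x \<in> V \<Longrightarrow> A *v x \<in> V"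
    and "x \<in> V" "x \<noteq> 0"
  obtains u c where "u \<in> V" "norm u = 1" "A *v u = c *\<^sub>R u"
proof -
  define f where "f u = u \<bullet> (A *v u)" for u :: "real^'n"
  define K where "K = V \<inter> sphere 0 1"
  have "compact K"
    unfolding K_def by (intro closed_Int_compact closed_subspace compact_sphere V)
  moreover have "x /\<^sub>R norm x \<in> K"
    using \<open>x \<in> V\<close> \<open>x \<noteq> 0\<close> V by (simp add: K_def subspace_scale)
  moreover have "continuous_on K f"
    unfolding f_def by (intro continuous_intros linear_continuous_on matrix_vector_mul_bounded_linear)
  ultimately obtain u where "u \<in> K" and umax: "\<And>y. y \<in> K \<Longrightarrow> f y \<le> f u"
    using continuous_attains_sup[of K f] by auto
  hence uV: "u \<in> V" and uu: "u \<bullet> u = 1" by (auto simp: K_def norm_eq_1)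
  have f_hom: "f (r *\<^sub>R y) = r\<^sup>2 * f y" for r y
    by (simp add: f_def matrix_vector_mult_scaleR power2_eq_square)
  have rayleigh: "f y \<le> f u * (y \<bullet> y)" if "y \<in> V" for y
  proof (cases "y = 0")
    case False
    hence "y /\<^sub>R norm y \<in> K" using that V by (simp add: K_def subspace_scale)
    hence "f y / (norm y)\<^sup>2 \<le> f u"
      using umax[of "y /\<^sub>R norm y"] f_hom[of "inverse (norm y)" y]
      by (simp add: power_inverse divide_inverse mult.commute)
    thus ?thesis using False by (simp add: power2_norm_eq_inner[symmetric] divide_le_eq)
  qed (simp add: f_def)
  have "A *v u = f u *\<^sub>R u"
    using rayleigh_maximiser_is_eigenvector[OF sym V inv uV uu] rayleigh unfolding f_def by blast
  thus thesis using that uV uu by (simp add: norm_eq_1)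
qed

lemma symmetric_matrix_orthonormal_eigenvectors:
  fixes A :: "real^'n^'n"
  assumes sym: "transpose A = A"
  shows "k \<le> CARD('n) \<Longrightarrow> \<exists>S. finite S \<and> card S = k \<and> pairwise orthogonal S \<and>
           (\<forall>u\<in>S. norm u = 1 \<and> (\<exists>c. A *v u = c *\<^sub>R u))"
proof (induction k)
  case 0
  show ?case by (intro exI[of _ "{}"]) auto
next
  case (Suc k)
  then obtain S where S: "finite S" "card S = k" "pairwise orthogonal S"
    and eig: "\<forall>u\<in>S. norm u = 1 \<and> (\<exists>c. A *v u = c *\<^sub>R u)" by (meson Suc_leD)
  define V where "V = {y. \<forall>x\<in>S. orthogonal x y}"
  have V: "subspace V" by (simp add: V_def subspace_orthogonal_to_vectors)
  have inv: "A *v y \<in> V" if "y \<in> V" for y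
  proof -
    have "s \<bullet> (A *v y) = 0" if "s \<in> S" for s
    proof -
      obtain c where "A *v s = c *\<^sub>R s" using eig \<open>s \<in> S\<close> by auto
      hence "s \<bullet> (A *v y) = c * (s \<bullet> y)" by (metis dot_lmul_matrix inner_scaleR_left sym transpose_matrix_vector)
      thus ?thesis using \<open>y \<in> V\<close> \<open>s \<in> S\<close> by (simp add: V_def orthogonal_def)
    qed
    thus ?thesis by (simp add: V_def orthogonal_def)
  qed
  have "independent S"
    using pairwise_orthogonal_independent[OF S(3)] eig by fastforce
  hence "dim S < DIM(real^'n)" using dim_eq_card_independent S(2) Suc.prems by fastforce
  then obtain x where "x \<noteq> 0" "\<And>y. y \<in> span S \<Longrightarrow> orthogonal x y"
    using orthogonal_to_subspace_exists by blast
  hence "x \<in> V" unfolding V_def using span_base orthogonal_commute by blast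
  then obtain u c where uV: "u \<in> V" and "norm u = 1" "A *v u = c *\<^sub>R u"
    using symmetric_matrix_eigenvector_in_invariant_subspace[OF sym V inv] \<open>x \<noteq> 0\<close> by metis
  moreover have "u \<notin> S"
    using uV \<open>norm u = 1\<close> by (auto simp: V_def orthogonal_def)
  ultimately show ?case
    using S eig by (intro exI[of _ "insert u S"])
      (auto simp: pairwise_insert V_def orthogonal_commute)
qed

theorem symmetric_matrix_diagonalizable:
  fixes A :: "real^'n^'n"
  assumes sym: "transpose A = A"
  obtains Q g where "orthogonal_matrix Q" "A = Q ** diag_mat g ** transpose Q"
proof -
  obtain S where S: "finite S" "card S = CARD('n)" "pairwise orthogonal S"
    and eig: "\<forall>u\<in>S. norm u = 1 \<and> (\<exists>c. A *v u = c *\<^sub>R u)"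
    using symmetric_matrix_orthonormal_eigenvectors[OF sym, of "CARD('n)"] by auto
  obtain f where f: "bij_betw f (UNIV::'n set) S"
    using finite_same_card_bij[of "UNIV::'n set" S] S by auto
  define Q :: "real^'n^'n" where "Q = (\<chi> i j. f j $ i)"
  define g where "g = (\<chi> j. f j \<bullet> (A *v f j))"
  have col: "column j Q = f j" for j by (simp add: Q_def column_def)
  have "orthogonal_matrix Q"
    using f eig S(3) unfolding orthogonal_matrix_orthonormal_columns col
    by (auto simp: bij_betw_def inj_on_def pairwise_def; metis)
  moreover have "A ** Q = Q ** diag_mat g"
  proof -
    have eigj: "A *v f j = g $ j *\<^sub>R f j" for j
    proof -
      obtain c where c: "A *v f j = c *\<^sub>R f j" using eig f by (auto simp: bij_betw_def)
      have "f j \<bullet> f j = 1" using eig f by (auto simp: bij_betw_def norm_eq_1)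
      thus ?thesis using c by (simp add: g_def)
    qed
    have "(\<Sum>k\<in>UNIV. A$i$k * f j $ k) = f j $ i * g $ j" for i j
      using arg_cong[OF eigj[of j], of "\<lambda>v. v $ i"] by (simp add: matrix_vector_mult_def mult.commute)
    thus ?thesis by (simp add: vec_eq_iff matrix_mult_diag_mat_nth) (simp add: matrix_mult_nth Q_def)
  qed
  ultimately have "A = Q ** diag_mat g ** transpose Q"
    by (metis matrix_mul_assoc matrix_mul_rid orthogonal_matrix_def)
  with \<open>orthogonal_matrix Q\<close> show thesis by (rule that)
qed

section \<open>Spectral calculus\<close>

lemma sym_eig_decomposition:
  assumes "orthogonal_matrix Q" "G = Q ** diag_mat g ** transpose Q" and eig: "sym_eig G = (Q', g')"
  shows "orthogonal_matrix Q' \<and> G = Q' ** diag_mat g' ** transpose Q'"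
proof -
  have "\<exists>x. (\<lambda>(Q, g). orthogonal_matrix Q \<and> G = Q ** diag_mat g ** transpose Q) x"
    using assms by auto
  from someI_ex[OF this] show ?thesis using eig by (simp add: sym_eig_def)
qed

lemma sym_eig_symmetric:
  assumes "transpose G = G" "sym_eig G = (Q, g)"
  shows "orthogonal_matrix Q \<and> G = Q ** diag_mat g ** transpose Q"
  using assms symmetric_matrix_diagonalizable sym_eig_decomposition by metis

lemma sym_pos_def_mat_eigenvalues_pos:
  assumes "sym_pos_def_mat A" "sym_eig A = (Q, a)"
  shows "0 < a $ i"
proof -
  have Q: "orthogonal_matrix Q" and A: "A = Q ** diag_mat a ** transpose Q"
    using assms sym_eig_symmetric by (auto simp: sym_pos_def_mat_def)
  have "a $ i = (transpose Q ** A ** Q) $ i $ i"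
    by (simp add: A matrix_mul_assoc orthogonal_matrix_cancel[OF Q] diag_mat_nth)
  also have "\<dots> = column i Q \<bullet> (A *v column i Q)" by (rule transpose_mult_mult_nth)
  also have "\<dots> > 0"
    using assms(1) Q unfolding sym_pos_def_mat_def
    by (metis norm_zero orthogonal_matrix_orthonormal_columns zero_neq_one)
  finally show ?thesis .
qed

lemma eigenvalue_ge_perturbation:
  fixes P Q :: "real^'n^'n"
  assumes P: "orthogonal_matrix P" and Q: "orthogonal_matrix Q"
    and X: "X = P ** diag_mat x ** transpose P" and A: "A = Q ** diag_mat a ** transpose Q"
    and a: "\<And>k. c \<le> a $ k"
  shows "c - norm (X - A) \<le> x $ i"
proof -
  define R where "R = transpose P ** Q"
  have "R ** transpose R = mat 1"
    using orthogonal_matrix_mul[of "transpose P" Q] P Q by (simp add: R_def orthogonal_matrix_def)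
  hence "(R ** transpose R) $ i $ i = 1" by (simp add: mat_def)
  hence rows: "(\<Sum>k\<in>UNIV. R$i$k * R$i$k) = 1" by (simp add: matrix_mult_nth transpose_def)
  have "c = (\<Sum>k\<in>UNIV. R$i$k * R$i$k * c)" by (simp add: rows flip: sum_distrib_right)
  also have "\<dots> \<le> (\<Sum>k\<in>UNIV. R$i$k * R$i$k * a$k)"
    by (intro sum_mono mult_left_mono a) simp
  also have "\<dots> = (transpose P ** A ** P) $ i $ i"
  proof -
    have "transpose P ** A ** P = R ** diag_mat a ** transpose R"
      by (simp add: A R_def matrix_transpose_mul matrix_mul_assoc)
    thus ?thesis by (simp add: matrix_conj_nth diag_mat_nth if_distrib if_distribR mult_ac cong: if_cong)
  qed
  also have "\<dots> = x $ i - (transpose P ** (X - A) ** P) $ i $ i"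
    by (simp add: matrix_diff_ldistrib matrix_diff_rdistrib X matrix_mul_assoc orthogonal_matrix_cancel P diag_mat_nth)
  also have "\<dots> \<le> x $ i + norm (X - A)"
    using abs_orthogonal_sandwich_le[OF P P, of "X - A" i i] by linarith
  finally show ?thesis by simp
qed

lemma diagonalization_intertwiner:
  fixes Q Q' :: "real^'n^'n"
  assumes "orthogonal_matrix Q" "orthogonal_matrix Q'"
    and "Q ** diag_mat g ** transpose Q = Q' ** diag_mat g' ** transpose Q'"
  shows "(transpose Q' ** Q) ** diag_mat g = diag_mat g' ** (transpose Q' ** Q)"
proof -
  have "transpose Q' ** (Q ** diag_mat g ** transpose Q) ** Q = transpose Q' ** (Q' ** diag_mat g' ** transpose Q') ** Q"
    using assms(3) by simp
  thus ?thesis by (simp add: matrix_mul_assoc orthogonal_matrix_cancel assms(1,2))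
qed

text \<open>An orthogonal change between two diagonalisations only mixes equal eigenvalues, so it commutes
  with every entrywise multiplier that is a function of the eigenvalues.\<close>
lemma intertwiner_entrywise_mult:
  fixes R :: "real^'n^'n"
  assumes "R ** diag_mat g = diag_mat g' ** R"
  shows "R ** (\<chi> i j. k (g$i) (g$j) * Z$i$j) ** transpose R
       = (\<chi> i j. k (g'$i) (g'$j) * (R ** Z ** transpose R)$i$j)"
proof -
  have mix: "R$i$a \<noteq> 0 \<Longrightarrow> g$a = g'$i" for i a
    using arg_cong[OF assms, of "\<lambda>M. M$i$a"] by (simp add: matrix_mult_diag_mat_nth diag_mat_mult_nth)
  have entry: "R$i$a * (k (g$a) (g$b) * Z$a$b) * R$j$b = k (g'$i) (g'$j) * (R$i$a * Z$a$b * R$j$b)"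
    for i j a b
    using mix[of i a] mix[of j b] by (cases "R$i$a = 0 \<or> R$j$b = 0") auto
  show ?thesis
    unfolding vec_eq_iff matrix_conj_nth vec_lambda_beta entry by (simp add: sum_distrib_left)
qed

lemma mat_fun_diag_conj:
  fixes Q :: "real^'n^'n"
  assumes Q: "orthogonal_matrix Q"
  shows "mat_fun h (Q ** diag_mat g ** transpose Q) = Q ** diag_mat (\<chi> i. h (g$i)) ** transpose Q"
proof -
  obtain Q' g' where eig: "sym_eig (Q ** diag_mat g ** transpose Q) = (Q', g')" by fastforce
  with sym_eig_decomposition[OF Q refl] have Q': "orthogonal_matrix Q'"
    and decomp: "Q ** diag_mat g ** transpose Q = Q' ** diag_mat g' ** transpose Q'" by auto
  define R where "R = transpose Q' ** Q"
  have intw: "R ** diag_mat g = diag_mat g' ** R"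
    unfolding R_def by (rule diagonalization_intertwiner[OF Q Q' decomp])
  have "R ** mat 1 ** transpose R = mat 1"
    using orthogonal_matrix_mul[of "transpose Q'" Q] Q Q' by (simp add: R_def orthogonal_matrix_def)
  moreover have "diag_mat v = (\<chi> i j. v$i * mat 1 $ i $ j)" for v :: "real^'n"
    by (simp add: vec_eq_iff diag_mat_nth mat_def)
  ultimately have "R ** diag_mat (\<chi> i. h (g$i)) ** transpose R = diag_mat (\<chi> i. h (g'$i))"
    using intertwiner_entrywise_mult[OF intw, of "\<lambda>a b. h a" "mat 1"] by simp
  hence "mat_fun h (Q ** diag_mat g ** transpose Q) = Q' ** (R ** diag_mat (\<chi> i. h (g$i)) ** transpose R) ** transpose Q'"
    by (simp add: mat_fun_def eig)
  also have "\<dots> = Q ** diag_mat (\<chi> i. h (g$i)) ** transpose Q"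
    by (simp add: R_def matrix_transpose_mul matrix_mul_assoc orthogonal_matrix_cancel Q')
  finally show ?thesis .
qed

lemma Ad_fun_diag_conj:
  fixes Q :: "real^'n^'n"
  assumes Q: "orthogonal_matrix Q"
  shows "Ad_fun h (Q ** diag_mat g ** transpose Q) X =
     Q ** (\<chi> i j. h ((g$i - g$j) / 2) * (transpose Q ** X ** Q)$i$j) ** transpose Q"
proof -
  obtain Q' g' where eig: "sym_eig (Q ** diag_mat g ** transpose Q) = (Q', g')" by fastforce
  with sym_eig_decomposition[OF Q refl] have Q': "orthogonal_matrix Q'"
    and decomp: "Q ** diag_mat g ** transpose Q = Q' ** diag_mat g' ** transpose Q'" by auto
  define R where "R = transpose Q' ** Q"
  have intw: "R ** diag_mat g = diag_mat g' ** R"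
    unfolding R_def by (rule diagonalization_intertwiner[OF Q Q' decomp])
  define Y where "Y = transpose Q ** X ** Q"
  have "transpose Q' ** X ** Q' = R ** Y ** transpose R"
    by (simp add: R_def Y_def matrix_transpose_mul matrix_mul_assoc orthogonal_matrix_cancel Q)
  hence "Ad_fun h (Q ** diag_mat g ** transpose Q) X
      = Q' ** (R ** (\<chi> i j. h ((g$i - g$j) / 2) * Y$i$j) ** transpose R) ** transpose Q'"
    using intertwiner_entrywise_mult[OF intw, of "\<lambda>a b. h ((a - b) / 2)" Y]
    by (simp add: Ad_fun_def eig Let_def)
  also have "\<dots> = Q ** (\<chi> i j. h ((g$i - g$j) / 2) * Y$i$j) ** transpose Q"
    by (simp add: R_def matrix_transpose_mul matrix_mul_assoc orthogonal_matrix_cancel Q')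
  finally show ?thesis by (simp add: Y_def)
qed

lemma mat_log_eigenbasis:
  assumes "sym_eig X = (P, x)"
  shows "mat_log X = P ** diag_mat (\<chi> i. ln (x$i)) ** transpose P"
  using assms by (simp add: mat_log_def mat_fun_def)

lemma transpose_Ad_fun_odd:
  assumes "transpose D = D" and odd: "\<And>x. k (- x) = - k x"
  shows "transpose (Ad_fun k H D) = - Ad_fun k H D"
proof -
  obtain Q h where eig: "sym_eig H = (Q, h)" by fastforce
  define Y where "Y = transpose Q ** D ** Q"
  have "transpose Y = Y" by (simp add: Y_def matrix_transpose_mul assms(1) matrix_mul_assoc)
  hence Ysym: "Y $ j $ i = Y $ i $ j" for i j by (metis transpose_def vec_lambda_beta)
  have kodd: "k ((h$j - h$i) / 2) = - k ((h$i - h$j) / 2)" for i j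
    using odd[of "(h$i - h$j) / 2"] by (simp add: minus_divide_left)
  define M where "M = (\<chi> i j. k ((h$i - h$j) / 2) * Y$i$j)"
  have "transpose M $ i $ j = (- M) $ i $ j" for i j
    using kodd[of i j] Ysym[of i j] by (simp add: M_def transpose_def)
  hence "transpose M = - M" by (simp add: vec_eq_iff)
  moreover have "Ad_fun k H D = Q ** M ** transpose Q"
    by (simp add: Ad_fun_def eig Let_def M_def Y_def)
  ultimately show ?thesis
    by (simp add: matrix_transpose_mul matrix_mul_assoc matrix_mult_uminus_right matrix_mult_uminus_left)
qed

section \<open>Divided differences of the logarithm\<close>

definition ln_divided_diff :: "real \<Rightarrow> real \<Rightarrow> real" where
  "ln_divided_diff x y = (if x = y then 1 / x else (ln x - ln y) / (x - y))"

lemma ln_diff_eq_divided_diff: "ln x - ln y = ln_divided_diff x y * (x - y)"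
  by (simp add: ln_divided_diff_def)

lemma ln_divided_diff_pos:
  assumes "0 < x" "0 < y"
  shows "0 < ln_divided_diff x y"
proof -
  have "0 < (ln x - ln y) / (x - y)" if "x \<noteq> y"
    using assms that by (cases "x < y") (auto simp: zero_less_divide_iff)
  thus ?thesis using assms by (auto simp: ln_divided_diff_def)
qed

lemma convex_combination_ge:
  fixes m x y t :: real
  assumes "m \<le> x" "m \<le> y" "0 \<le> t" "t \<le> 1"
  shows "m \<le> t * x + (1 - t) * y"
proof -
  have "t * m + (1 - t) * m \<le> t * x + (1 - t) * y"
    using assms by (intro add_mono mult_left_mono) auto
  thus ?thesis by (simp add: algebra_simps)
qed

lemma ln_divided_diff_has_integral:
  assumes "0 < x" "0 < y"
  shows "((\<lambda>t. 1 / (t * x + (1 - t) * y)) has_integral ln_divided_diff x y) {0..1}"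
proof (cases "x = y")
  case True
  thus ?thesis using has_integral_const_real[of "1 / x" 0 1] by (simp add: ln_divided_diff_def algebra_simps)
next
  case False
  have pos: "0 < t * x + (1 - t) * y" if "t \<in> {0..1}" for t
  proof -
    have "min x y \<le> t * x + (1 - t) * y" using that by (intro convex_combination_ge) auto
    thus ?thesis using assms by linarith
  qed
  have "((\<lambda>t. ln (t * x + (1 - t) * y) / (x - y)) has_real_derivative 1 / (t * x + (1 - t) * y))
      (at t)" if "t \<in> {0..1}" for t
    using pos[OF that] False by - (rule derivative_eq_intros refl | simp)+
  hence "((\<lambda>t. ln (t * x + (1 - t) * y) / (x - y)) has_vector_derivative 1 / (t * x + (1 - t) * y))
      (at t within {0..1})" if "t \<in> {0..1}" for t
    using that by (simp add: has_real_derivative_iff_has_vector_derivative has_vector_derivative_at_within)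
  from fundamental_theorem_of_calculus[OF _ this] show ?thesis
    using False by (simp add: ln_divided_diff_def diff_divide_distrib)
qed

lemma ln_divided_diff_lipschitz:
  assumes "0 < m" "m \<le> x" "m \<le> a" "m \<le> y"
  shows "\<bar>ln_divided_diff x y - ln_divided_diff a y\<bar> \<le> \<bar>x - a\<bar> / m\<^sup>2"
proof -
  have "((\<lambda>t. 1 / (t * x + (1 - t) * y) - 1 / (t * a + (1 - t) * y))
      has_integral (ln_divided_diff x y - ln_divided_diff a y)) (cbox 0 1)"
    using ln_divided_diff_has_integral assms by (auto intro!: has_integral_diff)
  moreover have "\<bar>1 / (t * x + (1 - t) * y) - 1 / (t * a + (1 - t) * y)\<bar> \<le> \<bar>x - a\<bar> / m\<^sup>2"
    if "t \<in> cbox 0 1" for t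
  proof -
    define p q where "p = t * x + (1 - t) * y" and "q = t * a + (1 - t) * y"
    have t: "0 \<le> t" "t \<le> 1" using that by auto
    have "m \<le> p" "m \<le> q" using convex_combination_ge t assms by (simp_all add: p_def q_def)
    have "m * m \<le> p * q" using assms(1) \<open>m \<le> p\<close> \<open>m \<le> q\<close> by (intro mult_mono) auto
    have "1 / p - 1 / q = t * (a - x) / (p * q)"
      using \<open>m \<le> p\<close> \<open>m \<le> q\<close> assms(1) by (simp add: p_def q_def field_simps)
    hence "\<bar>1 / p - 1 / q\<bar> = t * \<bar>x - a\<bar> / (p * q)"
      using \<open>m \<le> p\<close> \<open>m \<le> q\<close> assms(1) t by (simp add: abs_mult abs_minus_commute)
    also have "\<dots> \<le> \<bar>x - a\<bar> / (m * m)"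
      using t \<open>m * m \<le> p * q\<close> assms(1) by (intro frac_le) (auto simp: mult_left_le_one_le)
    finally show ?thesis by (simp add: p_def q_def power2_eq_square)
  qed
  ultimately have "norm (ln_divided_diff x y - ln_divided_diff a y)
      \<le> \<bar>x - a\<bar> / m\<^sup>2 * Henstock_Kurzweil_Integration.content (cbox 0 (1::real))"
    by (intro has_integral_bound) auto
  thus ?thesis by simp
qed

section \<open>The derivative of the matrix logarithm\<close>

text \<open>The Daleckii--Krein formula for the derivative of \<open>mat_log\<close> at \<open>Q ** diag_mat a ** transpose Q\<close>.\<close>
definition mat_log_deriv :: "real^'n^'n \<Rightarrow> real^'n \<Rightarrow> real^'n^'n \<Rightarrow> real^'n^'n" where
  "mat_log_deriv Q a E =
     Q ** (\<chi> i j. ln_divided_diff (a$i) (a$j) * (transpose Q ** E ** Q)$i$j) ** transpose Q"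

lemma linear_mat_log_deriv: "linear (mat_log_deriv Q a)" for Q :: "real^'n^'n"
proof -
  have "linear (\<lambda>E. (\<chi> i j. ln_divided_diff (a$i) (a$j) * (transpose Q ** E ** Q)$i$j) :: real^'n^'n)"
    by (rule linearI) (simp_all add: vec_eq_iff matrix_mult_distribs algebra_simps)
  hence "linear (\<lambda>E. Q ** (\<chi> i j. ln_divided_diff (a$i) (a$j) * (transpose Q ** E ** Q)$i$j)
      ** transpose Q)"
    by (rule linear_compose[unfolded o_def, where g = "\<lambda>M. Q ** M ** transpose Q"])
      (rule linearI; simp add: matrix_mult_distribs)
  thus ?thesis by (simp add: mat_log_deriv_def[abs_def])
qed

lemma mat_log_remainder_eigenbasis:
  fixes X A :: "real^'n^'n"
  assumes P: "orthogonal_matrix P" and Q: "orthogonal_matrix Q"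
    and eigX: "sym_eig X = (P, x)" "X = P ** diag_mat x ** transpose P"
    and eigA: "sym_eig A = (Q, a)" "A = Q ** diag_mat a ** transpose Q"
  defines "R \<equiv> transpose P ** Q" and "Y \<equiv> transpose Q ** (X - A) ** Q"
  shows "(transpose P ** (mat_log X - mat_log A - mat_log_deriv Q a (X - A)) ** Q) $ i $ j
    = (\<Sum>k\<in>UNIV. R$i$k * (ln_divided_diff (x$i) (a$j) - ln_divided_diff (a$k) (a$j)) * Y$k$j)"
proof -
  have Z: "transpose P ** (X - A) ** Q = diag_mat x ** R - R ** diag_mat a"
    by (simp add: R_def eigX eigA matrix_diff_ldistrib matrix_diff_rdistrib matrix_mul_assoc
        orthogonal_matrix_cancel P Q)
  have RY: "transpose P ** (X - A) ** Q = R ** Y"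
    by (simp add: R_def Y_def matrix_mul_assoc orthogonal_matrix_cancel Q)
  have "R$i$j * (x$i - a$j) = (\<Sum>k\<in>UNIV. R$i$k * Y$k$j)"
    using arg_cong[OF Z[unfolded RY], of "\<lambda>M. M$i$j"]
    by (simp add: matrix_mult_diag_mat_nth diag_mat_mult_nth) (simp add: matrix_mult_nth algebra_simps)
  have "ln (x$i) * R$i$j - R$i$j * ln (a$j) = R$i$j * (ln (x$i) - ln (a$j))"
    by (simp add: algebra_simps)
  also have "\<dots> = ln_divided_diff (x$i) (a$j) * (R$i$j * (x$i - a$j))"
    by (simp add: ln_diff_eq_divided_diff mult.left_commute)
  also have "\<dots> = (\<Sum>k\<in>UNIV. ln_divided_diff (x$i) (a$j) * R$i$k * Y$k$j)"
    by (simp add: \<open>R$i$j * (x$i - a$j) = _\<close> sum_distrib_left mult.assoc)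
  finally have "ln (x$i) * R$i$j - R$i$j * ln (a$j) = \<dots>" .
  moreover have "transpose P ** (mat_log X - mat_log A - mat_log_deriv Q a (X - A)) ** Q
      = diag_mat (\<chi> i. ln (x$i)) ** R - R ** diag_mat (\<chi> i. ln (a$i))
        - R ** (\<chi> i j. ln_divided_diff (a$i) (a$j) * Y$i$j)"
    unfolding mat_log_eigenbasis[OF eigX(1)] mat_log_eigenbasis[OF eigA(1)]
    by (simp add: mat_log_deriv_def R_def Y_def matrix_diff_ldistrib matrix_diff_rdistrib
        matrix_mul_assoc orthogonal_matrix_cancel P Q)
  ultimately show ?thesis
    by (simp add: matrix_mult_diag_mat_nth diag_mat_mult_nth)
      (simp add: matrix_mult_nth sum_subtractf[symmetric] algebra_simps)
qed

lemma mat_log_remainder_eigenbasis_bound: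
  fixes X A :: "real^'n^'n"
  assumes P: "orthogonal_matrix P" and Q: "orthogonal_matrix Q"
    and eigX: "sym_eig X = (P, x)" "X = P ** diag_mat x ** transpose P"
    and eigA: "sym_eig A = (Q, a)" "A = Q ** diag_mat a ** transpose Q"
    and m: "0 < m" "\<And>i. m \<le> x$i" "\<And>i. m \<le> a$i"
  shows "\<bar>(transpose P ** (mat_log X - mat_log A - mat_log_deriv Q a (X - A)) ** Q) $ i $ j\<bar>
    \<le> real CARD('n) * (norm (X - A))\<^sup>2 / m\<^sup>2"
proof -
  define E where "E = X - A"
  define R where "R = transpose P ** Q"
  have Z: "transpose P ** E ** Q = diag_mat x ** R - R ** diag_mat a"
    by (simp add: E_def R_def eigX(2) eigA(2) matrix_diff_ldistrib matrix_diff_rdistrib matrix_mul_assoc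
        orthogonal_matrix_cancel P Q)
  have "\<bar>R$i$k\<bar> * \<bar>x$i - a$k\<bar> = \<bar>(transpose P ** E ** Q) $ i $ k\<bar>" for k
    unfolding Z by (simp add: matrix_mult_diag_mat_nth diag_mat_mult_nth right_diff_distrib mult.commute
        flip: abs_mult)
  hence "\<bar>R$i$k\<bar> * \<bar>x$i - a$k\<bar> \<le> norm E" for k
    using abs_orthogonal_sandwich_le[OF P Q] by metis
  \<comment> \<open>a large entry of \<open>R\<close> forces nearby eigenvalues, where \<open>ln_divided_diff\<close> varies little\<close>
  have R_bound: "\<bar>R$i$k * (ln_divided_diff (x$i) (a$j) - ln_divided_diff (a$k) (a$j))\<bar> \<le> norm E / m\<^sup>2"
    for k
  proof -
    have "\<bar>R$i$k * (ln_divided_diff (x$i) (a$j) - ln_divided_diff (a$k) (a$j))\<bar>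
        \<le> \<bar>R$i$k\<bar> * (\<bar>x$i - a$k\<bar> / m\<^sup>2)"
      unfolding abs_mult using ln_divided_diff_lipschitz[OF m(1) m(2)[of i] m(3)[of k] m(3)[of j]]
      by (rule mult_left_mono) simp
    also have "\<dots> \<le> norm E / m\<^sup>2"
      using \<open>\<bar>R$i$k\<bar> * \<bar>x$i - a$k\<bar> \<le> norm E\<close> m(1) by (simp add: divide_right_mono)
    finally show ?thesis .
  qed
  have "\<bar>(transpose P ** (mat_log X - mat_log A - mat_log_deriv Q a E) ** Q) $ i $ j\<bar>
      \<le> (\<Sum>k\<in>UNIV. \<bar>R$i$k * (ln_divided_diff (x$i) (a$j) - ln_divided_diff (a$k) (a$j))\<bar>
          * \<bar>(transpose Q ** E ** Q)$k$j\<bar>)"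
    unfolding E_def mat_log_remainder_eigenbasis[OF P Q eigX eigA]
    by (rule order_trans[OF sum_abs]) (simp add: abs_mult R_def)
  also have "\<dots> \<le> (\<Sum>k\<in>(UNIV::'n set). norm E / m\<^sup>2 * norm E)"
    using R_bound abs_orthogonal_sandwich_le[OF Q Q, of E] by (intro sum_mono mult_mono) auto
  finally show ?thesis by (simp add: E_def power2_eq_square)
qed

lemma mat_log_remainder_bound:
  fixes X A :: "real^'n^'n"
  assumes "transpose X = X" "transpose A = A" and eigX: "sym_eig X = (P, x)" and eigA: "sym_eig A = (Q, a)"
    and m: "0 < m" "\<And>i. m \<le> x$i" "\<And>i. m \<le> a$i"
  shows "norm (mat_log X - mat_log A - mat_log_deriv Q a (X - A))
    \<le> real CARD('n) ^ 5 / m\<^sup>2 * (norm (X - A))\<^sup>2"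
proof -
  obtain P: "orthogonal_matrix P" and X: "X = P ** diag_mat x ** transpose P"
    using sym_eig_symmetric assms(1) eigX by blast
  obtain Q: "orthogonal_matrix Q" and A: "A = Q ** diag_mat a ** transpose Q"
    using sym_eig_symmetric assms(2) eigA by blast
  define n where "n = real CARD('n)"
  define r where "r = mat_log X - mat_log A - mat_log_deriv Q a (X - A)"
  define N where "N = transpose P ** r ** Q"
  have "r = transpose (transpose P) ** N ** transpose Q"
    by (simp add: N_def matrix_mul_assoc orthogonal_matrix_cancel P Q)
  hence "norm r \<le> n * n * norm N"
    using abs_orthogonal_sandwich_le[of "transpose P" "transpose Q" N] P Q
    by (simp add: n_def norm_matrix_le_entrywise)
  also have "norm N \<le> n * n * (n * (norm (X - A))\<^sup>2 / m\<^sup>2)"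
    unfolding n_def N_def r_def
    by (rule norm_matrix_le_entrywise, rule mat_log_remainder_eigenbasis_bound[OF P Q eigX X eigA A m])
  finally have "norm r \<le> n * n * (n * n * (n * (norm (X - A))\<^sup>2 / m\<^sup>2))"
    by (simp add: n_def mult_left_mono)
  thus ?thesis by (simp add: r_def n_def power_def eval_nat_numeral mult_ac)
qed

lemma has_derivative_within_quadratic_remainder:
  fixes f :: "'a::real_normed_vector \<Rightarrow> 'b::real_normed_vector"
  assumes "bounded_linear f'" "0 < d"
    and rem: "\<And>y. y \<in> S \<Longrightarrow> norm (y - x) < d \<Longrightarrow> norm (f y - f x - f' (y - x)) \<le> K * (norm (y - x))\<^sup>2"
  shows "(f has_derivative f') (at x within S)"
  unfolding has_derivative_within'
proof (intro conjI allI impI assms(1))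
  fix e :: real assume "0 < e"
  show "\<exists>d'>0. \<forall>y\<in>S. 0 < norm (y - x) \<and> norm (y - x) < d' \<longrightarrow>
      norm (f y - f x - f' (y - x)) / norm (y - x) < e"
  proof (intro exI[of _ "min d (e / (\<bar>K\<bar> + 1))"] conjI ballI impI)
    show "0 < min d (e / (\<bar>K\<bar> + 1))" using \<open>0 < d\<close> \<open>0 < e\<close> by (simp add: add_nonneg_pos)
    fix y assume "y \<in> S" and y: "0 < norm (y - x) \<and> norm (y - x) < min d (e / (\<bar>K\<bar> + 1))"
    hence "norm (f y - f x - f' (y - x)) / norm (y - x) \<le> K * norm (y - x)"
      using rem[of y] by (simp add: divide_le_eq power2_eq_square mult_ac)
    also have "\<dots> \<le> \<bar>K\<bar> * norm (y - x)" by (simp add: mult_right_mono)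
    also have "\<dots> \<le> \<bar>K\<bar> * (e / (\<bar>K\<bar> + 1))"
      using y by (intro mult_left_mono) auto
    also have "\<dots> < e"
      using \<open>0 < e\<close> by (simp add: field_simps add_nonneg_pos)
    finally show "norm (f y - f x - f' (y - x)) / norm (y - x) < e" .
  qed
qed

theorem mat_log_has_derivative:
  fixes A :: "real^'n^'n"
  assumes A: "sym_pos_def_mat A" and eigA: "sym_eig A = (Q, a)"
  shows "(mat_log has_derivative mat_log_deriv Q a) (at A within {X. sym_pos_def_mat X})"
proof -
  obtain Q: "orthogonal_matrix Q" and decompA: "A = Q ** diag_mat a ** transpose Q"
    using sym_eig_symmetric A eigA by (metis sym_pos_def_mat_def)
  define amin where "amin = Min (range (\<lambda>i. a$i))"
  have "0 < amin" using sym_pos_def_mat_eigenvalues_pos[OF A eigA] by (simp add: amin_def)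
  have amin: "amin \<le> a$i" for i by (simp add: amin_def)
  show ?thesis
  proof (rule has_derivative_within_quadratic_remainder)
    show "bounded_linear (mat_log_deriv Q a)"
      using linear_mat_log_deriv linear_conv_bounded_linear by blast
    show "0 < amin / 2" using \<open>0 < amin\<close> by simp
    fix X assume "X \<in> {X. sym_pos_def_mat X}" and close: "norm (X - A) < amin / 2"
    hence X: "sym_pos_def_mat X" by simp
    obtain P x where eigX: "sym_eig X = (P, x)" by fastforce
    obtain P: "orthogonal_matrix P" and decompX: "X = P ** diag_mat x ** transpose P"
      using sym_eig_symmetric X eigX by (metis sym_pos_def_mat_def)
    have x: "amin / 2 \<le> x$i" for i
      using eigenvalue_ge_perturbation[OF P Q decompX decompA amin, of i] close by linarith
    have a: "amin / 2 \<le> a$i" for i using amin[of i] \<open>0 < amin\<close> by linarith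
    show "norm (mat_log X - mat_log A - mat_log_deriv Q a (X - A))
        \<le> real CARD('n) ^ 5 / (amin / 2)\<^sup>2 * (norm (X - A))\<^sup>2"
      by (rule mat_log_remainder_bound)
        (use X A eigX eigA \<open>0 < amin\<close> x a in \<open>auto simp: sym_pos_def_mat_def\<close>)
  qed
qed

definition orth_conj :: "real^'n^'n \<Rightarrow> real^'n^'n \<Rightarrow> real^'n^'n" where
  "orth_conj Q M = transpose Q ** M ** Q"

context
  fixes Q :: "real^'n^'n"
  assumes Q: "orthogonal_matrix Q"
begin

lemma orth_conj_add: "orth_conj Q (M + N) = orth_conj Q M + orth_conj Q N"
  by (simp add: orth_conj_def matrix_mult_distribs)

lemma orth_conj_diff: "orth_conj Q (M - N) = orth_conj Q M - orth_conj Q N"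
  by (simp add: orth_conj_def matrix_mult_distribs)

lemma orth_conj_scaleR: "orth_conj Q (c *\<^sub>R M) = c *\<^sub>R orth_conj Q M"
  by (simp add: orth_conj_def matrix_mult_distribs)

lemma orth_conj_mult: "orth_conj Q (M ** N) = orth_conj Q M ** orth_conj Q N"
  by (simp add: orth_conj_def matrix_mul_assoc orthogonal_matrix_cancel Q)

lemma orth_conj_transpose: "orth_conj Q (transpose M) = transpose (orth_conj Q M)"
  by (simp add: orth_conj_def matrix_transpose_mul matrix_mul_assoc)

lemma orth_conj_conj: "orth_conj Q (Q ** M ** transpose Q) = M"
  by (simp add: orth_conj_def matrix_mul_assoc orthogonal_matrix_cancel Q)

lemma orth_conj_eq_iff: "orth_conj Q M = orth_conj Q N \<longleftrightarrow> M = N"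
proof -
  have "Q ** orth_conj Q M ** transpose Q = M" for M
    by (simp add: orth_conj_def matrix_mul_assoc orthogonal_matrix_cancel Q)
  thus ?thesis by metis
qed

end

lemmas orth_conj_simps = orth_conj_add orth_conj_diff orth_conj_scaleR orth_conj_mult
  orth_conj_transpose orth_conj_conj

lemma orth_conj_mat_log_deriv:
  assumes "orthogonal_matrix Q"
  shows "orth_conj Q (mat_log_deriv Q a E)
    = (\<chi> i j. ln_divided_diff (a$i) (a$j) * orth_conj Q E $ i $ j)"
  by (simp add: mat_log_deriv_def orth_conj_conj[OF assms] orth_conj_def[symmetric])

lemma mat_log_deriv_conj_diag:
  assumes "orthogonal_matrix Q"
  shows "mat_log_deriv Q a (Q ** diag_mat c ** transpose Q) = Q ** diag_mat (\<chi> i. c$i / a$i) ** transpose Q"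
proof -
  have "(\<chi> i j. ln_divided_diff (a$i) (a$j) * diag_mat c $ i $ j) = diag_mat (\<chi> i. c$i / a$i)"
    by (simp add: vec_eq_iff diag_mat_nth ln_divided_diff_def)
  thus ?thesis
    using orth_conj_conj[OF assms, of "diag_mat c"] by (simp add: mat_log_deriv_def orth_conj_def)
qed

lemma mat_log_deriv_eq_0_iff:
  fixes A :: "real^'n^'n"
  assumes "sym_pos_def_mat A" "sym_eig A = (Q, a)"
  shows "mat_log_deriv Q a E = 0 \<longleftrightarrow> E = 0"
proof
  assume L0: "mat_log_deriv Q a E = 0"
  have Q: "orthogonal_matrix Q" using sym_eig_symmetric assms by (metis sym_pos_def_mat_def)
  have "ln_divided_diff (a$i) (a$j) \<noteq> 0" for i j
    using sym_pos_def_mat_eigenvalues_pos[OF assms] ln_divided_diff_pos by (metis less_irrefl)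
  moreover have zero: "orth_conj Q 0 = 0"
    by (simp add: orth_conj_def vec_eq_iff matrix_mult_nth)
  ultimately have "orth_conj Q E $ i $ j = 0" for i j
    using arg_cong[OF L0, of "\<lambda>M. orth_conj Q M $ i $ j"] by (simp add: orth_conj_mat_log_deriv Q)
  hence "orth_conj Q E = orth_conj Q 0" by (simp add: vec_eq_iff zero)
  thus "E = 0" by (simp add: orth_conj_eq_iff Q)
qed (simp add: linear_0[OF linear_mat_log_deriv])

section \<open>The log-conformation identity\<close>

lemma Lfun_minus: "Lfun (- x) = - Lfun x"
  by (simp add: Lfun_def)

lemma cosh_sinh_half_log_ratio:
  fixes a b :: real
  assumes "0 < a" "0 < b"
  shows "cosh (ln a / 2 - ln b / 2) * (a - b) = sinh (ln a / 2 - ln b / 2) * (a + b)"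
proof -
  define p q where "p = exp (ln a / 2)" and "q = exp (ln b / 2)"
  have "0 < p" "0 < q" by (simp_all add: p_def q_def)
  have ab: "a = p * p" "b = q * q" using assms by (simp_all add: p_def q_def flip: exp_add)
  have chsh: "cosh (ln a / 2 - ln b / 2) = (p / q + q / p) / 2"
    "sinh (ln a / 2 - ln b / 2) = (p / q - q / p) / 2"
    by (simp_all add: cosh_def sinh_def exp_diff p_def q_def)
  show ?thesis unfolding chsh using \<open>0 < p\<close> \<open>0 < q\<close> unfolding ab by (simp add: field_simps)
qed

text \<open>Entry \<open>(i,j)\<close> of \<open>2 Ad\<^sub>H \<Omega>\<^sup>l\<^sup>o\<^sup>g + dlog(\<nabla>v B + B \<nabla>v\<^sup>T)/2 = D\<close> in an eigenbasis
  of \<open>B\<close>: \<open>a, b\<close> are the \<open>i\<close>-th and \<open>j\<close>-th eigenvalues of \<open>B\<close>, and \<open>g, g'\<close> the entries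
  \<open>(i,j), (j,i)\<close> of \<open>\<nabla>v\<close> in that basis.\<close>
lemma log_conformation_scalar:
  fixes a b g g' :: real
  assumes "0 < a" "0 < b"
  defines "d \<equiv> ln a / 2 - ln b / 2"
  shows "d * ((g - g') / 2 - Lfun d * ((g + g') / 2)) + ln_divided_diff a b / 2 * (g * b + a * g')
    = (g + g') / 2"
proof (cases "a = b")
  case True
  thus ?thesis using assms by (simp add: d_def Lfun_def ln_divided_diff_def field_simps)
next
  case False
  hence "d \<noteq> 0" using assms by (simp add: d_def)
  hence "sinh d \<noteq> 0" by simp
  have "cosh d / sinh d = (a + b) / (a - b)"
    using cosh_sinh_half_log_ratio[OF assms(1,2), folded d_def] \<open>sinh d \<noteq> 0\<close> False
    by (simp add: field_simps)
  hence L: "Lfun d = (a + b) / (a - b) - 1 / d"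
    using \<open>d \<noteq> 0\<close> by (simp add: Lfun_def)
  have ld: "ln_divided_diff a b = 2 * d / (a - b)"
    using False by (simp add: ln_divided_diff_def d_def field_simps)
  \<comment> \<open>writing \<open>a = b + c\<close> lets \<open>field_simps\<close> cancel the denominators \<open>a - b\<close>\<close>
  obtain c where "a = b + c" "c \<noteq> 0" using False by (intro that[of "a - b"]) auto
  thus ?thesis unfolding L ld using \<open>d \<noteq> 0\<close> by (simp add: field_simps)
qed

lemma half_mat_log_eigenbasis:
  assumes "sym_eig A = (Q, a)"
  shows "(1/2) *\<^sub>R mat_log A = Q ** diag_mat (\<chi> i. ln (a$i) / 2) ** transpose Q"
proof -
  have "diag_mat (\<chi> i. ln (a$i) / 2) = (1/2) *\<^sub>R diag_mat (\<chi> i. ln (a$i))"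
    by (simp add: vec_eq_iff diag_mat_nth)
  thus ?thesis
    by (simp add: mat_log_eigenbasis[OF assms] matrix_mult_scaleR_right matrix_mult_scaleR_left)
qed

lemma orth_conj_Omega_log:
  fixes A G :: "real^'n^'n"
  assumes "transpose A = A" "sym_eig A = (Q, a)"
  defines "Gt \<equiv> orth_conj Q G" and "h \<equiv> \<chi> i. ln (a$i) / 2"
  shows "orth_conj Q ((1/2) *\<^sub>R (G - transpose G)
      - Ad_fun (\<lambda>x. Lfun (2 * x)) ((1/2) *\<^sub>R mat_log A) ((1/2) *\<^sub>R (G + transpose G)))
    = (\<chi> i j. (Gt$i$j - Gt$j$i) / 2 - Lfun (h$i - h$j) * ((Gt$i$j + Gt$j$i) / 2))"
proof -
  have Q: "orthogonal_matrix Q" using sym_eig_symmetric assms(1,2) by blast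
  have half: "2 * ((x - y) / 2) = x - y" for x y :: real by simp
  have "orth_conj Q ((1/2) *\<^sub>R (G + transpose G)) = (\<chi> i j. (Gt$i$j + Gt$j$i) / 2)"
    by (simp add: Gt_def orth_conj_simps Q) (simp add: vec_eq_iff transpose_def)
  moreover have "orth_conj Q ((1/2) *\<^sub>R (G - transpose G)
      - Ad_fun (\<lambda>x. Lfun (2 * x)) ((1/2) *\<^sub>R mat_log A) ((1/2) *\<^sub>R (G + transpose G)))
    = (1/2) *\<^sub>R (Gt - transpose Gt)
      - (\<chi> i j. Lfun (h$i - h$j) * orth_conj Q ((1/2) *\<^sub>R (G + transpose G)) $ i $ j)"
    unfolding half_mat_log_eigenbasis[OF assms(2)] Ad_fun_diag_conj[OF Q] orth_conj_diff[OF Q]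
      orth_conj_conj[OF Q] vec_lambda_beta half h_def
    by (simp add: Gt_def orth_conj_simps Q flip: orth_conj_def)
  ultimately show ?thesis by (simp add: vec_eq_iff transpose_def)
qed

lemma log_conformation_identity:
  fixes A G :: "real^'n^'n"
  assumes A: "sym_pos_def_mat A" and eigA: "sym_eig A = (Q, a)"
  defines "H \<equiv> (1/2) *\<^sub>R mat_log A" and "D \<equiv> (1/2) *\<^sub>R (G + transpose G)"
    and "\<Omega> \<equiv> (1/2) *\<^sub>R (G - transpose G)
      - Ad_fun (\<lambda>x. Lfun (2 * x)) ((1/2) *\<^sub>R mat_log A) ((1/2) *\<^sub>R (G + transpose G))"
  shows "2 *\<^sub>R Ad H \<Omega> + (1/2) *\<^sub>R mat_log_deriv Q a (G ** A + A ** transpose G) = D"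
proof -
  have sym: "transpose A = A" using A by (simp add: sym_pos_def_mat_def)
  obtain Q: "orthogonal_matrix Q" and decomp: "A = Q ** diag_mat a ** transpose Q"
    using sym_eig_symmetric sym eigA by blast
  define h where "h = (\<chi> i. ln (a$i) / 2)"
  define Gt where "Gt = orth_conj Q G"
  have cH: "orth_conj Q H = diag_mat h"
    using orth_conj_conj[OF Q] by (simp add: H_def half_mat_log_eigenbasis[OF eigA] h_def)
  have cA: "orth_conj Q A = diag_mat a" using decomp orth_conj_conj[OF Q] by simp
  have "orth_conj Q \<Omega> = (\<chi> i j. (Gt$i$j - Gt$j$i) / 2 - Lfun (h$i - h$j) * ((Gt$i$j + Gt$j$i) / 2))"
    unfolding \<Omega>_def Gt_def h_def by (rule orth_conj_Omega_log[OF sym eigA])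
  hence cAd: "orth_conj Q (2 *\<^sub>R Ad H \<Omega>) $ i $ j
      = (h$i - h$j) * ((Gt$i$j - Gt$j$i) / 2 - Lfun (h$i - h$j) * ((Gt$i$j + Gt$j$i) / 2))" for i j
    unfolding Ad_def orth_conj_scaleR[OF Q] orth_conj_diff[OF Q] orth_conj_mult[OF Q] cH
    by (simp add: matrix_mult_diag_mat_nth diag_mat_mult_nth field_simps)
  have cL: "orth_conj Q ((1/2) *\<^sub>R mat_log_deriv Q a (G ** A + A ** transpose G)) $ i $ j
      = ln_divided_diff (a$i) (a$j) / 2 * (Gt$i$j * a$j + a$i * Gt$j$i)" for i j
    unfolding orth_conj_scaleR[OF Q] orth_conj_mat_log_deriv[OF Q] orth_conj_add[OF Q]
      orth_conj_mult[OF Q] orth_conj_transpose[OF Q] cA Gt_def[symmetric]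
    by (simp add: matrix_mult_diag_mat_nth diag_mat_mult_nth transpose_def)
  have cD: "orth_conj Q D $ i $ j = (Gt$i$j + Gt$j$i) / 2" for i j
    by (simp add: D_def Gt_def orth_conj_simps Q) (simp add: transpose_def)
  have "orth_conj Q (2 *\<^sub>R Ad H \<Omega> + (1/2) *\<^sub>R mat_log_deriv Q a (G ** A + A ** transpose G)) $ i $ j
      = orth_conj Q D $ i $ j" for i j
    using log_conformation_scalar[of "a$i" "a$j" "Gt$i$j" "Gt$j$i"] sym_pos_def_mat_eigenvalues_pos[OF A eigA]
    by (simp add: orth_conj_add[OF Q] cAd cL cD h_def)
  hence "orth_conj Q (2 *\<^sub>R Ad H \<Omega> + (1/2) *\<^sub>R mat_log_deriv Q a (G ** A + A ** transpose G))
      = orth_conj Q D" by (simp add: vec_eq_iff)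
  thus ?thesis by (simp add: orth_conj_eq_iff Q)
qed

lemma mat_log_deriv_relaxation:
  assumes A: "sym_pos_def_mat A" and eigA: "sym_eig A = (Q, a)"
  shows "mat_log_deriv Q a (A - mat 1) = mat 1 - mat_exp (- 2 *\<^sub>R ((1/2) *\<^sub>R mat_log A))"
    and "mat_log_deriv Q a (A ** mat_log A) = mat_log A"
proof -
  obtain Q: "orthogonal_matrix Q" and decomp: "A = Q ** diag_mat a ** transpose Q"
    using sym_eig_symmetric A eigA by (metis sym_pos_def_mat_def)
  have a: "a$i \<noteq> 0" for i using sym_pos_def_mat_eigenvalues_pos[OF A eigA] by (metis less_irrefl)
  have "- 2 *\<^sub>R ((1/2) *\<^sub>R mat_log A) = Q ** diag_mat (\<chi> i. - ln (a$i)) ** transpose Q"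
  proof -
    have "diag_mat (\<chi> i. - ln (a$i)) = - diag_mat (\<chi> i. ln (a$i))" by (simp add: vec_eq_iff diag_mat_nth)
    thus ?thesis by (simp add: mat_log_eigenbasis[OF eigA] matrix_mult_distribs)
  qed
  hence "mat_exp (- 2 *\<^sub>R ((1/2) *\<^sub>R mat_log A)) = Q ** diag_mat (\<chi> i. 1 / a$i) ** transpose Q"
    using sym_pos_def_mat_eigenvalues_pos[OF A eigA]
    by (simp add: mat_exp_def mat_fun_diag_conj[OF Q] exp_minus inverse_eq_divide)
  moreover have "(\<chi> i. (a$i - 1) / a$i) = (\<chi> i. 1 - 1 / a$i)" using a by (simp add: vec_eq_iff field_simps)
  ultimately show "mat_log_deriv Q a (A - mat 1) = mat 1 - mat_exp (- 2 *\<^sub>R ((1/2) *\<^sub>R mat_log A))"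
    by (simp add: decomp mat_1_eq_orthogonal_conj[OF Q] conj_diag_mat_diff mat_log_deriv_conj_diag Q)
  have "A ** mat_log A = Q ** (diag_mat a ** (transpose Q ** Q) ** diag_mat (\<chi> i. ln (a$i))) ** transpose Q"
    unfolding mat_log_eigenbasis[OF eigA] by (simp add: decomp matrix_mul_assoc)
  also have "\<dots> = Q ** diag_mat (\<chi> i. a$i * ln (a$i)) ** transpose Q"
    by (simp add: orthogonal_matrix_cancel Q diag_mat_mult_diag_mat)
  finally have "A ** mat_log A = \<dots>" .
  thus "mat_log_deriv Q a (A ** mat_log A) = mat_log A"
    using a by (simp add: mat_log_deriv_conj_diag Q mat_log_eigenbasis[OF eigA])
qed

lemma Omega_log_antisymmetric:
  fixes A G :: "real^'n^'n"
  defines "\<Omega> \<equiv> (1/2) *\<^sub>R (G - transpose G)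
      - Ad_fun (\<lambda>x. Lfun (2 * x)) ((1/2) *\<^sub>R mat_log A) ((1/2) *\<^sub>R (G + transpose G))"
  shows "transpose \<Omega> = - \<Omega>"
proof -
  have "transpose (Ad_fun (\<lambda>x. Lfun (2 * x)) ((1/2) *\<^sub>R mat_log A) ((1/2) *\<^sub>R (G + transpose G)))
      = - Ad_fun (\<lambda>x. Lfun (2 * x)) ((1/2) *\<^sub>R mat_log A) ((1/2) *\<^sub>R (G + transpose G))"
    by (rule transpose_Ad_fun_odd)
      (simp_all add: transpose_scalar transpose_add Lfun_minus)
  thus ?thesis unfolding \<Omega>_def transpose_diff transpose_scalar transpose_transpose
    by (simp add: algebra_simps)
qed

theorem log_conformation_pointwise:
  fixes A G Bd :: "real^'n^'n" and \<tau> :: real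
  assumes A: "sym_pos_def_mat A" and eigA: "sym_eig A = (Q, a)"
  defines "H \<equiv> (1/2) *\<^sub>R mat_log A" and "D \<equiv> (1/2) *\<^sub>R (G + transpose G)"
    and "\<Omega> \<equiv> (1/2) *\<^sub>R (G - transpose G)
      - Ad_fun (\<lambda>x. Lfun (2 * x)) ((1/2) *\<^sub>R mat_log A) ((1/2) *\<^sub>R (G + transpose G))"
    and "Hd \<equiv> (1/2) *\<^sub>R mat_log_deriv Q a Bd"
  shows "(Bd + (1/\<tau>) *\<^sub>R (A - mat 1) = G ** A + A ** transpose G \<longleftrightarrow>
          Hd + 2 *\<^sub>R Ad H \<Omega> + (1/(2*\<tau>)) *\<^sub>R (mat 1 - mat_exp (- 2 *\<^sub>R H)) = D)
       \<and> (Hd + 2 *\<^sub>R Ad H \<Omega> + (1/\<tau>) *\<^sub>R H = D \<longleftrightarrow>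
          Bd - G ** A - A ** transpose G + (1/\<tau>) *\<^sub>R (A ** mat_log A) = 0)"
proof -
  let ?L = "mat_log_deriv Q a"
  have lin: "linear ?L" by (rule linear_mat_log_deriv)
  have Ad: "2 *\<^sub>R Ad H \<Omega> = D - (1/2) *\<^sub>R ?L (G ** A + A ** transpose G)"
    using log_conformation_identity[OF A eigA, of G] by (simp add: H_def D_def \<Omega>_def algebra_simps)
  have "Hd + 2 *\<^sub>R Ad H \<Omega> + (1/(2*\<tau>)) *\<^sub>R (mat 1 - mat_exp (- 2 *\<^sub>R H)) - D
      = (1/2) *\<^sub>R ?L (Bd + (1/\<tau>) *\<^sub>R (A - mat 1) - (G ** A + A ** transpose G))"
    unfolding mat_log_deriv_relaxation(1)[OF A eigA, folded H_def, symmetric]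
    by (simp add: Hd_def Ad linear_add[OF lin] linear_diff[OF lin] linear_scale[OF lin] algebra_simps)
  moreover have "Hd + 2 *\<^sub>R Ad H \<Omega> + (1/\<tau>) *\<^sub>R H - D
      = (1/2) *\<^sub>R ?L (Bd - G ** A - A ** transpose G + (1/\<tau>) *\<^sub>R (A ** mat_log A))"
    by (simp add: Hd_def Ad[unfolded H_def] H_def mat_log_deriv_relaxation(2)[OF A eigA]
        linear_add[OF lin] linear_diff[OF lin] linear_scale[OF lin] algebra_simps)
  moreover have "(1/2) *\<^sub>R ?L Y = 0 \<longleftrightarrow> Y = 0" for Y
    using mat_log_deriv_eq_0_iff[OF A eigA] by simp
  ultimately show ?thesis by (metis eq_iff_diff_eq_0)
qed

section \<open>The transport equations\<close>

lemma material_derivative_chain_rule: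
  assumes F: "(F has_derivative (\<lambda>k. L (B' k))) (at p)" and B: "(B has_derivative B') (at p)"
    and L: "linear L"
  shows "dt F p + adv v F p = L (dt B p + adv v B p)"
  by (simp add: dt_def adv_def frechet_derivative_at[OF F, symmetric] frechet_derivative_at[OF B, symmetric]
      linear_add[OF L] linear_sum[OF L] linear_scale[OF L])

lemma has_derivative_half_mat_log:
  assumes U: "open U" "p \<in> U" and B: "(B has_derivative B') (at p)"
    and spd: "\<forall>q\<in>U. sym_pos_def_mat (B q)" and eig: "sym_eig (B p) = (Q, b)"
  shows "((\<lambda>q. (1/2) *\<^sub>R mat_log (B q)) has_derivative (\<lambda>k. (1/2) *\<^sub>R mat_log_deriv Q b (B' k))) (at p)"
proof -
  have "(mat_log has_derivative mat_log_deriv Q b) (at (B p) within B ` U)"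
    using mat_log_has_derivative[OF _ eig] spd U(2) by (auto intro: has_derivative_subset)
  with has_derivative_at_withinI[OF B] have "((mat_log \<circ> B) has_derivative (mat_log_deriv Q b \<circ> B')) (at p within U)"
    by (rule diff_chain_within)
  hence "((mat_log \<circ> B) has_derivative (mat_log_deriv Q b \<circ> B')) (at p)"
    using at_within_open[OF U(2,1)] by simp
  thus ?thesis by (auto intro: has_derivative_scaleR_right simp: o_def)
qed

theorem mainTheorem15:
  fixes \<tau> T :: real
    and U :: "(real \<times> (real^'n)) set"
    and v :: "real \<times> (real^'n) \<Rightarrow> real^'n"
    and B :: "real \<times> (real^'n) \<Rightarrow> real^'n^'n"
  assumes tau_pos: "\<tau> > 0"
    and U_open: "open U"
    and U_sub: "U \<subseteq> {0<..<T} \<times> UNIV"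
    and v_smooth: "smooth_on v U"
    and B_smooth: "smooth_on B U"
    and B_spd: "\<forall>p\<in>U. sym_pos_def_mat (B p)"
  defines "W \<equiv> (\<lambda>p. (1/2) *\<^sub>R (grad v p - transpose (grad v p)))"
    and "D \<equiv> (\<lambda>p. (1/2) *\<^sub>R (grad v p + transpose (grad v p)))"
    and "H \<equiv> (\<lambda>p. (1/2) *\<^sub>R mat_log (B p))"
    and "Omega \<equiv> (\<lambda>p. (1/2) *\<^sub>R (grad v p - transpose (grad v p))
             - Ad_fun (\<lambda>x. Lfun (2 * x)) ((1/2) *\<^sub>R mat_log (B p))
                 ((1/2) *\<^sub>R (grad v p + transpose (grad v p))))"
  shows
    "((\<forall>p\<in>U. dt B p + adv v B p + (1/\<tau>) *\<^sub>R (B p - mat 1)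
              = grad v p ** B p + B p ** transpose (grad v p))
      \<longleftrightarrow>
      (\<forall>p\<in>U. dt H p + adv v H p + 2 *\<^sub>R Ad (H p) (Omega p)
              + (1/(2*\<tau>)) *\<^sub>R (mat 1 - mat_exp (- 2 *\<^sub>R H p)) = D p))
     \<and> (\<forall>p\<in>U. transpose (Omega p) = - Omega p)
     \<and> ((\<forall>p\<in>U. dt H p + adv v H p + 2 *\<^sub>R Ad (H p) (Omega p) + (1/\<tau>) *\<^sub>R H p = D p)
      \<longleftrightarrow>
      (\<forall>p\<in>U. dt B p + adv v B p - grad v p ** B p - B p ** transpose (grad v p)
              + (1/\<tau>) *\<^sub>R (B p ** mat_log (B p)) = 0))"
  proof -
  have "(dt B p + adv v B p + (1/\<tau>) *\<^sub>R (B p - mat 1) = grad v p ** B p + B p ** transpose (grad v p)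
          \<longleftrightarrow> dt H p + adv v H p + 2 *\<^sub>R Ad (H p) (Omega p)
                + (1/(2*\<tau>)) *\<^sub>R (mat 1 - mat_exp (- 2 *\<^sub>R H p)) = D p)
     \<and> transpose (Omega p) = - Omega p
     \<and> (dt H p + adv v H p + 2 *\<^sub>R Ad (H p) (Omega p) + (1/\<tau>) *\<^sub>R H p = D p
          \<longleftrightarrow> dt B p + adv v B p - grad v p ** B p - B p ** transpose (grad v p)
                + (1/\<tau>) *\<^sub>R (B p ** mat_log (B p)) = 0)" if "p \<in> U" for p
  proof -
    obtain Q b where eig: "sym_eig (B p) = (Q, b)" by fastforce
    have "B differentiable (at p)"
      using B_smooth \<open>p \<in> U\<close> by (simp add: smooth_on_def) (metis Ck_on.simps(2) One_nat_def)
    hence "(B has_derivative frechet_derivative B (at p)) (at p)" by (rule frechet_derivative_works[THEN iffD1])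
    hence "dt H p + adv v H p = (1/2) *\<^sub>R mat_log_deriv Q b (dt B p + adv v B p)"
      using has_derivative_half_mat_log[OF U_open \<open>p \<in> U\<close> _ B_spd eig] unfolding H_def
      by (intro material_derivative_chain_rule) (auto intro: linear_compose_scale_right linear_mat_log_deriv)
    thus ?thesis
      using log_conformation_pointwise[OF bspec[OF B_spd \<open>p \<in> U\<close>] eig]
        Omega_log_antisymmetric[of "grad v p" "B p"]
      by (simp add: H_def D_def Omega_def)
  qed
  thus ?thesis by blast
qed

end
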